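(* Let $N\geq1$ be an integer and let $f\in L^2(\mathbb{T})$ be supported on an interval $I\subset\mathbb{T}$. Then $$\|\mathbb{E}^*_Nf\|_{L^2}\leq\Big(|I|+\frac{2}{N}\Big)^{1/2}\|f\|_{L^2}.$$
   Context: $\mathbb{T}$ is identified with $[0,1)$, with addition modulo $1$ and Lebesgue measure. For $x_0\in\mathbb{T}$ set $\tau_{x_0}f(x)=f(x-x_0)$, and set $\mathbb{E}^*_N=\frac1N\sum_{j=0}^{N-1}\tau_{j/N}$. *)

theory Defs
  imports "HOL-Analysis.Analysis"
begin

text \<open>The torus T is identified with [0,1) with Lebesgue measure; functions on T are
  functions real \<Rightarrow> complex of which only the values on [0,1) matter.\<close>

definition T_measure :: "real measure" where
  "T_measure = lebesgue_on {0..<1}"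

definition tau :: "real \<Rightarrow> (real \<Rightarrow> complex) \<Rightarrow> real \<Rightarrow> complex" where
  "tau x0 f = (\<lambda>x. f (frac (x - x0)))"

definition E_star :: "nat \<Rightarrow> (real \<Rightarrow> complex) \<Rightarrow> real \<Rightarrow> complex" where
  "E_star N f = (\<lambda>x. (1 / of_nat N) * (\<Sum>j<N. tau (real j / real N) f x))"

definition in_L2 :: "(real \<Rightarrow> complex) \<Rightarrow> bool" where
  "in_L2 f \<longleftrightarrow> f \<in> borel_measurable T_measure \<and> integrable T_measure (\<lambda>x. (cmod (f x))\<^sup>2)"

definition L2_norm :: "(real \<Rightarrow> complex) \<Rightarrow> real" where
  "L2_norm f = sqrt (LINT x|T_measure. (cmod (f x))\<^sup>2)"

text \<open>Closed arc of T starting at a with length l (0 \<le> l \<le> 1): its measure is l.\<close>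
definition arc :: "real \<Rightarrow> real \<Rightarrow> real set" where
  "arc a l = frac ` {a..a+l}"

end

theory Submission
  imports Defs
begin

text \<open>Pointwise, E*_N f x is the average of the N values f (x - j/N). These points are
  1/N-spaced on the circle, so at most N l + 1 of them lie in the arc of length l carrying f,
  and Cauchy-Schwarz over the nonzero terms gives
  |E*_N f x|^2 \<le> (N l + 1) / N^2 * \<Sum>_j |f (x - j/N)|^2.
  Rotations of the circle preserve Lebesgue measure, so integrating yields
  \<parallel>E*_N f\<parallel>^2 \<le> (l + 1/N) \<parallel>f\<parallel>^2, slightly better than claimed.\<close>

lemma sets_T_measure: "A \<in> sets T_measure \<longleftrightarrow> A \<subseteq> {0..<1} \<and> A \<in> sets lebesgue"
  by (simp add: T_measure_def sets_restrict_space_iff)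

lemma space_T_measure: "space T_measure = {0..<1}"
  by (simp add: T_measure_def)

lemma emeasure_T_measure: "A \<subseteq> {0..<1} \<Longrightarrow> emeasure T_measure A = emeasure lebesgue A"
  by (simp add: T_measure_def emeasure_restrict_space)

definition rotation :: "real \<Rightarrow> real \<Rightarrow> real" where
  "rotation c x = frac (x - c)"

lemma tau_eq_rotation: "tau c f x = f (rotation c x)"
  by (simp add: tau_def rotation_def)

lemma rotation_frac: "rotation (frac c) = rotation c"
  by (simp add: fun_eq_iff rotation_def frac_diff_simp)

lemma rotation_in_unit_interval: "rotation c x \<in> {0..<1}"
  by (simp add: rotation_def frac_lt_1)

lemma rotation_eq:
  assumes "x \<in> {0..<1}" "c \<in> {0..<1}"
  shows "rotation c x = (if c \<le> x then x - c else x - c + 1)"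
  using assms frac_diff_pos[of c x] frac_diff_neg[of x c] by (simp add: rotation_def)

lemma emeasure_lebesgue_translation:
  fixes t :: "'a::euclidean_space"
  shows "emeasure lebesgue ((+) t ` S) = emeasure lebesgue S"
  using emeasure_lebesgue_affine[of 1 t S] by (simp add: add.commute)

lemma vimage_rotation:
  assumes c: "c \<in> {0..<1}" and A: "A \<subseteq> {0..<1}"
  shows "rotation c -` A \<inter> {0..<1} =
    (+) c ` (A \<inter> {..<1 - c}) \<union> (+) (c - 1) ` (A \<inter> {1 - c..})"
proof (intro equalityI subsetI)
  fix x assume "x \<in> rotation c -` A \<inter> {0..<1}"
  then have x: "x \<in> {0..<1}" and "rotation c x \<in> A" by auto
  show "x \<in> (+) c ` (A \<inter> {..<1 - c}) \<union> (+) (c - 1) ` (A \<inter> {1 - c..})"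
  proof (cases "c \<le> x")
    case True
    then have "x - c \<in> A \<inter> {..<1 - c}"
      using \<open>rotation c x \<in> A\<close> rotation_eq[OF x c] x by simp
    then show ?thesis by (auto simp: image_iff intro!: bexI[of _ "x - c"])
  next
    case False
    then have "x - c + 1 \<in> A \<inter> {1 - c..}"
      using \<open>rotation c x \<in> A\<close> rotation_eq[OF x c] x by simp
    then show ?thesis by (auto simp: image_iff intro!: bexI[of _ "x - c + 1"])
  qed
qed (use c A in \<open>auto simp: rotation_eq\<close>)

lemma rotation_measurable: "rotation c \<in> T_measure \<rightarrow>\<^sub>M T_measure"
proof (rule measurableI)
  fix A assume "A \<in> sets T_measure"
  then have A: "A \<subseteq> {0..<1}" "A \<in> sets lebesgue" by (auto simp: sets_T_measure)
  define d where "d = frac c"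
  have d: "d \<in> {0..<1}" by (simp add: d_def frac_lt_1)
  have "(+) d ` (A \<inter> {..<1 - d}) \<union> (+) (d - 1) ` (A \<inter> {1 - d..}) \<in> sets lebesgue"
    using A(2) by (intro sets.Un lebesgue_sets_translation sets.Int) auto
  with vimage_rotation[OF d A(1)] A show "rotation c -` A \<inter> space T_measure \<in> sets T_measure"
    by (auto simp: d_def rotation_frac space_T_measure sets_T_measure)
qed (use rotation_in_unit_interval in \<open>simp add: space_T_measure\<close>)

lemma distr_rotation: "distr T_measure T_measure (rotation c) = T_measure"
proof (rule measure_eqI)
  fix A assume "A \<in> sets (distr T_measure T_measure (rotation c))"
  then have A: "A \<subseteq> {0..<1}" "A \<in> sets lebesgue" by (auto simp: sets_T_measure)
  define d where "d = frac c"
  have d: "d \<in> {0..<1}" by (simp add: d_def frac_lt_1)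
  define B C where "B = A \<inter> {..<1 - d}" and "C = A \<inter> {1 - d..}"
  have BC: "B \<in> sets lebesgue" "C \<in> sets lebesgue" "B \<inter> C = {}" "B \<union> C = A"
    using A(2) by (auto simp: B_def C_def)
  have "(+) d ` B \<subseteq> {d..}" "(+) (d - 1) ` C \<subseteq> {..<d}"
    using A(1) by (auto simp: B_def C_def)
  then have disjoint: "(+) d ` B \<inter> (+) (d - 1) ` C = {}"
    by (force simp: disjoint_iff)
  have "emeasure (distr T_measure T_measure (rotation c)) A
      = emeasure T_measure (rotation d -` A \<inter> {0..<1})"
    using A by (simp add: emeasure_distr rotation_measurable sets_T_measure space_T_measure
        d_def rotation_frac)
  also have "\<dots> = emeasure lebesgue (rotation d -` A \<inter> {0..<1})"
    by (rule emeasure_T_measure) auto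
  also have "\<dots> = emeasure lebesgue ((+) d ` B \<union> (+) (d - 1) ` C)"
    using vimage_rotation[OF d A(1)] by (simp add: B_def C_def)
  also have "\<dots> = emeasure lebesgue ((+) d ` B) + emeasure lebesgue ((+) (d - 1) ` C)"
    using BC disjoint by (intro plus_emeasure[symmetric] lebesgue_sets_translation)
  also have "\<dots> = emeasure lebesgue B + emeasure lebesgue C"
    by (simp add: emeasure_lebesgue_translation)
  also have "\<dots> = emeasure T_measure A"
    using A(1) BC plus_emeasure[of B lebesgue C] by (simp only: emeasure_T_measure)
  finally show "emeasure (distr T_measure T_measure (rotation c)) A = emeasure T_measure A" .
qed simp

lemma integrable_rotation_iff:
  fixes g :: "real \<Rightarrow> 'b::{banach, second_countable_topology}"
  assumes "g \<in> borel_measurable T_measure"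
  shows "integrable T_measure (\<lambda>x. g (rotation c x)) \<longleftrightarrow> integrable T_measure g"
  using integrable_distr_eq[OF rotation_measurable assms] by (simp add: distr_rotation)

lemma integral_rotation:
  fixes g :: "real \<Rightarrow> 'b::{banach, second_countable_topology}"
  assumes "g \<in> borel_measurable T_measure"
  shows "(\<integral>x. g (rotation c x) \<partial>T_measure) = (\<integral>x. g x \<partial>T_measure)"
  using integral_distr[OF rotation_measurable assms] by (simp add: distr_rotation)

lemma AE_rotation:
  fixes P :: "real \<Rightarrow> bool"
  shows "AE x in T_measure. P x \<Longrightarrow> AE x in T_measure. P (rotation c x)"
  using AE_distrD[OF rotation_measurable[of c], of P] unfolding distr_rotation .

lemma frac_in_arcE:
  assumes "frac y \<in> arc a l"
  obtains k :: int where "a \<le> y + k" "y + k \<le> a + l"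
proof -
  from assms obtain z where z: "z \<in> {a..a + l}" "frac z = frac y"
    by (auto simp: arc_def)
  then obtain k where "z = y + of_int k" by (elim frac_eqE)
  with z(1) show thesis by (intro that[of k]) auto
qed

lemma card_int_interval_le:
  assumes "0 \<le> L"
  shows "real (card {\<lceil>u\<rceil>..\<lfloor>u + L\<rfloor>}) \<le> L + 1"
proof -
  have "real_of_int \<lfloor>u + L\<rfloor> - real_of_int \<lceil>u\<rceil> \<le> L"
    using of_int_floor_le[of "u + L"] le_of_int_ceiling[of u] by linarith
  with assms show ?thesis
    by (cases "\<lceil>u\<rceil> \<le> \<lfloor>u + L\<rfloor> + 1") (simp_all add: of_nat_nat)
qed

lemma card_rotations_in_arc_le:
  assumes N: "N \<ge> 1" and l: "0 \<le> l"
  shows "real (card {j\<in>{..<N}. rotation (real j / real N) x \<in> arc a l}) \<le> l * real N + 1"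
proof -
  define A where "A = {j\<in>{..<N}. rotation (real j / real N) x \<in> arc a l}"
  have "\<forall>j\<in>A. \<exists>k::int. a \<le> x - real j / real N + k \<and> x - real j / real N + k \<le> a + l"
    by (auto simp: A_def rotation_def elim!: frac_in_arcE)
  then obtain k :: "nat \<Rightarrow> int"
    where k: "\<And>j. j \<in> A \<Longrightarrow>
      a \<le> x - real j / real N + k j \<and> x - real j / real N + k j \<le> a + l"
    by metis
  define u where "u = real N * (a - x)"
  \<comment> \<open>N times the lift of x - j/N into [a, a + l], minus N x: j is recovered from it mod N\<close>
  define \<phi> where "\<phi> j = int N * k j - int j" for j
  have "\<phi> ` A \<subseteq> {\<lceil>u\<rceil>..\<lfloor>u + real N * l\<rfloor>}"
  proof safe
    fix j assume "j \<in> A"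
    with k have "real N * a \<le> real N * (x - real j / real N + k j)"
      and "real N * (x - real j / real N + k j) \<le> real N * (a + l)"
      by (auto intro: mult_left_mono)
    with N have "u \<le> \<phi> j" "\<phi> j \<le> u + real N * l"
      by (auto simp: u_def \<phi>_def algebra_simps)
    then show "\<phi> j \<in> {\<lceil>u\<rceil>..\<lfloor>u + real N * l\<rfloor>}"
      by (simp add: ceiling_le_iff le_floor_iff)
  qed
  moreover have "inj_on \<phi> A"
  proof (rule inj_on_inverseI)
    fix j assume j: "j \<in> A"
    have "(int j - int N * k j) mod int N = int j mod int N"
      by (simp add: mod_diff_right_eq[symmetric])
    with j show "nat ((- \<phi> j) mod int N) = j"
      by (simp add: A_def \<phi>_def)
  qed
  ultimately have "card A \<le> card {\<lceil>u\<rceil>..\<lfloor>u + real N * l\<rfloor>}"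
    by (intro card_inj_on_le) auto
  also have "\<dots> \<le> real N * l + 1"
    using l by (intro card_int_interval_le) simp
  finally show ?thesis by (simp add: A_def mult.commute)
qed

lemma norm_sum_squared_le_card_nonzero:
  fixes z :: "'a \<Rightarrow> 'b::real_normed_vector"
  assumes "finite S"
  shows "(norm (\<Sum>j\<in>S. z j))\<^sup>2 \<le> real (card {j\<in>S. z j \<noteq> 0}) * (\<Sum>j\<in>S. (norm (z j))\<^sup>2)"
proof -
  define S' where "S' = {j\<in>S. z j \<noteq> 0}"
  have "S' \<subseteq> S" by (auto simp: S'_def)
  have "(norm (\<Sum>j\<in>S. z j))\<^sup>2 = (norm (\<Sum>j\<in>S'. z j))\<^sup>2"
    using assms by (subst sum.mono_neutral_right[of S S']) (auto simp: S'_def)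
  also have "\<dots> \<le> (\<Sum>j\<in>S'. norm (z j))\<^sup>2"
    by (intro power_mono norm_sum) simp
  also have "\<dots> \<le> (\<Sum>j\<in>S'. (norm (z j))\<^sup>2) * real (card S')"
    by (rule sum_squared_le_sum_of_squares)
  also have "\<dots> \<le> (\<Sum>j\<in>S. (norm (z j))\<^sup>2) * real (card S')"
    using assms \<open>S' \<subseteq> S\<close> by (intro mult_right_mono sum_mono2) auto
  finally show ?thesis by (simp add: S'_def mult.commute)
qed

lemma norm_E_star_squared_le:
  assumes N: "N \<ge> 1" and l: "0 \<le> l"
    and supp: "\<forall>j<N. rotation (real j / real N) x \<notin> arc a l \<longrightarrow> tau (real j / real N) f x = 0"
  shows "(norm (E_star N f x))\<^sup>2
    \<le> (l * real N + 1) / (real N)\<^sup>2 * (\<Sum>j<N. (norm (tau (real j / real N) f x))\<^sup>2)"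
proof -
  define z where "z j = tau (real j / real N) f x" for j
  have "card {j\<in>{..<N}. z j \<noteq> 0} \<le> card {j\<in>{..<N}. rotation (real j / real N) x \<in> arc a l}"
    using supp by (intro card_mono) (auto simp: z_def)
  then have card_z: "real (card {j\<in>{..<N}. z j \<noteq> 0}) \<le> l * real N + 1"
    using card_rotations_in_arc_le[OF N l, of x a] by linarith
  have "(norm (\<Sum>j<N. z j))\<^sup>2
      \<le> real (card {j\<in>{..<N}. z j \<noteq> 0}) * (\<Sum>j<N. (norm (z j))\<^sup>2)"
    by (rule norm_sum_squared_le_card_nonzero) simp
  also have "\<dots> \<le> (l * real N + 1) * (\<Sum>j<N. (norm (z j))\<^sup>2)"
    by (intro mult_right_mono[OF card_z] sum_nonneg) simp
  finally show ?thesis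
    by (simp add: E_star_def z_def norm_divide power_divide divide_right_mono)
qed

lemma integral_norm_E_star_squared_le:
  assumes N: "N \<ge> 1" and l: "0 \<le> l" and f: "in_L2 f"
    and supp: "AE x in T_measure. x \<notin> arc a l \<longrightarrow> f x = 0"
  shows "(\<integral>x. (norm (E_star N f x))\<^sup>2 \<partial>T_measure)
    \<le> (l + 1 / real N) * (\<integral>x. (norm (f x))\<^sup>2 \<partial>T_measure)"
proof -
  let ?c = "\<lambda>j. real j / real N"
  let ?C = "(l * real N + 1) / (real N)\<^sup>2"
  have f_meas: "(\<lambda>y. (norm (f y))\<^sup>2) \<in> borel_measurable T_measure"
    and f_int: "integrable T_measure (\<lambda>y. (norm (f y))\<^sup>2)"
    using f by (auto simp: in_L2_def)
  have shift_int: "integrable T_measure (\<lambda>x. (norm (tau (?c j) f x))\<^sup>2)" for j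
    using f_int integrable_rotation_iff[OF f_meas] by (simp add: tau_eq_rotation)
  have shift_eq: "(\<integral>x. (norm (tau (?c j) f x))\<^sup>2 \<partial>T_measure) = (\<integral>x. (norm (f x))\<^sup>2 \<partial>T_measure)"
    for j
    using integral_rotation[OF f_meas] by (simp add: tau_eq_rotation)
  have "AE x in T_measure. \<forall>j<N. rotation (?c j) x \<notin> arc a l \<longrightarrow> tau (?c j) f x = 0"
    using AE_rotation[OF supp] by (simp add: AE_all_countable tau_eq_rotation)
  then have bound:
    "AE x in T_measure. (norm (E_star N f x))\<^sup>2 \<le> ?C * (\<Sum>j<N. (norm (tau (?c j) f x))\<^sup>2)"
    by eventually_elim (rule norm_E_star_squared_le[OF N l])
  have "(\<integral>x. (norm (E_star N f x))\<^sup>2 \<partial>T_measure)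
      \<le> (\<integral>x. ?C * (\<Sum>j<N. (norm (tau (?c j) f x))\<^sup>2) \<partial>T_measure)"
  proof (rule integral_mono_AE')
    show "AE x in T_measure. 0 \<le> ?C * (\<Sum>j<N. (norm (tau (?c j) f x))\<^sup>2)"
      using l by (intro AE_I2 mult_nonneg_nonneg sum_nonneg) auto
  qed (use bound shift_int in auto)
  also have "\<dots> = ?C * real N * (\<integral>x. (norm (f x))\<^sup>2 \<partial>T_measure)"
    using shift_int by (simp add: integral_sum shift_eq)
  also have "?C * real N = l + 1 / real N"
    using N by (simp add: field_simps power2_eq_square)
  finally show ?thesis .
qed

theorem lemma2p6:
  fixes N :: nat and f :: "real \<Rightarrow> complex" and a l :: real
  assumes "N \<ge> 1"
    and "in_L2 f"
    and "0 \<le> l" and "l \<le> 1"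
    and "AE x in T_measure. x \<notin> arc a l \<longrightarrow> f x = 0"
  shows "L2_norm (E_star N f) \<le> sqrt (l + 2 / real N) * L2_norm f"
proof -
  let ?I = "LINT x|T_measure. (cmod (f x))\<^sup>2"
  have "(LINT x|T_measure. (cmod (E_star N f x))\<^sup>2) \<le> (l + 1 / real N) * ?I"
    using assms by (intro integral_norm_E_star_squared_le) auto
  also have "\<dots> \<le> (l + 2 / real N) * ?I"
    by (intro mult_right_mono) (auto simp: divide_right_mono)
  finally have "L2_norm (E_star N f) \<le> sqrt ((l + 2 / real N) * ?I)"
    unfolding L2_norm_def by (rule real_sqrt_le_mono)
  then show ?thesis
    by (simp add: L2_norm_def real_sqrt_mult)
qed

end
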